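(* The problem Demand-Aware Direct Throughput can be solved in $O(n^3)$ time: given a doubly stochastic $n\times n$ matrix $\mathcal M$ and a number $\kappa\in[0,1]$, one can decide in $O(n^3)$ time (counting arithmetic operations and comparisons on the input numbers as unit cost) whether there exists a directed $(2n-1)$-regular multigraph $G$ on $[n]$ whose direct throughput with respect to $\mathcal M$ is at least $\kappa$.
   Context: Let $n\ge 1$ and $[n]=\{1,\dots,n\}$. Networks are finite directed multigraphs on vertex set $[n]$; self-loops and parallel arcs are allowed. A directed multigraph is directed $r$-regular if every vertex has exactly $r$ outgoing and exactly $r$ incoming arcs (a self-loop at $v$ counts as one outgoing and one incoming arc of $v$). An $n\times n$ matrix is doubly stochastic if all entries are nonnegative and every row and every column sums to $1$. In a directed $(2n-1)$-regular multigraph $G$ on $[n]$ every arc has capacity $\frac{1}{2n-1}$. $G$ directly hosts a nonnegative $n\times n$ matrix $\mathcal M=(a_{i,j})$ if $a_{u,v}\le \frac{m_{u,v}}{2n-1}$ for all $u,v\in[n]$, where $m_{u,v}$ is the number of arcs from $u$ to $v$ in $G$. The direct throughput of $G$ with respect to a doubly stochastic $\mathcal M$ is the largest $\theta$ such that $G$ directly hosts $\theta\mathcal M$. *)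

theory Defs
  imports Complex_Main
begin

text \<open>A directed multigraph on [n] = {1..n} is represented by its arc multiplicity
  function: mult u v is the number of arcs from u to v (self-loops u = v allowed,
  parallel arcs allowed). Values outside [n] are irrelevant.\<close>

definition directed_regular :: "nat \<Rightarrow> nat \<Rightarrow> (nat \<Rightarrow> nat \<Rightarrow> nat) \<Rightarrow> bool" where
  "directed_regular n r mult \<longleftrightarrow>
     (\<forall>u\<in>{1..n}. (\<Sum>v\<in>{1..n}. mult u v) = r \<and> (\<Sum>v\<in>{1..n}. mult v u) = r)"

definition doubly_stochastic :: "nat \<Rightarrow> (nat \<Rightarrow> nat \<Rightarrow> real) \<Rightarrow> bool" where
  "doubly_stochastic n A \<longleftrightarrow>
     (\<forall>i\<in>{1..n}. \<forall>j\<in>{1..n}. 0 \<le> A i j) \<and>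
     (\<forall>i\<in>{1..n}. (\<Sum>j\<in>{1..n}. A i j) = 1) \<and>
     (\<forall>j\<in>{1..n}. (\<Sum>i\<in>{1..n}. A i j) = 1)"

definition directly_hosts :: "nat \<Rightarrow> (nat \<Rightarrow> nat \<Rightarrow> nat) \<Rightarrow> (nat \<Rightarrow> nat \<Rightarrow> real) \<Rightarrow> bool" where
  "directly_hosts n mult A \<longleftrightarrow>
     (\<forall>u\<in>{1..n}. \<forall>v\<in>{1..n}. A u v \<le> real (mult u v) / real (2 * n - 1))"

definition direct_throughput :: "nat \<Rightarrow> (nat \<Rightarrow> nat \<Rightarrow> nat) \<Rightarrow> (nat \<Rightarrow> nat \<Rightarrow> real) \<Rightarrow> real" where
  "direct_throughput n mult M =
     Sup {\<theta>. 0 \<le> \<theta> \<and> directly_hosts n mult (\<lambda>u v. \<theta> * M u v)}"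

text \<open>Arithmetic operations and comparisons
  on reals cost one step each; constants are integers; indirect addressing is only
  allowed with a natural-number address (otherwise the machine is stuck forever).\<close>

datatype instr =
    LoadConst nat int
  | Add nat nat nat
  | Sub nat nat nat
  | Mul nat nat nat
  | Div nat nat nat
  | Load nat nat
  | Store nat nat
  | JumpLeq nat nat nat
  | Jump nat
  | Halt

type_synonym config = "nat \<times> (nat \<Rightarrow> real)"

fun exec_instr :: "instr \<Rightarrow> config \<Rightarrow> config" where
  "exec_instr (LoadConst d c) (pc, m) = (Suc pc, m(d := real_of_int c))"
| "exec_instr (Add d a b) (pc, m) = (Suc pc, m(d := m a + m b))"
| "exec_instr (Sub d a b) (pc, m) = (Suc pc, m(d := m a - m b))"
| "exec_instr (Mul d a b) (pc, m) = (Suc pc, m(d := m a * m b))"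
| "exec_instr (Div d a b) (pc, m) = (Suc pc, m(d := m a / m b))"
| "exec_instr (Load d a) (pc, m) =
     (if m a \<in> \<nat> then (Suc pc, m(d := m (nat \<lfloor>m a\<rfloor>))) else (pc, m))"
| "exec_instr (Store d a) (pc, m) =
     (if m d \<in> \<nat> then (Suc pc, m(nat \<lfloor>m d\<rfloor> := m a)) else (pc, m))"
| "exec_instr (JumpLeq a b l) (pc, m) = (if m a \<le> m b then (l, m) else (Suc pc, m))"
| "exec_instr (Jump l) (pc, m) = (l, m)"
| "exec_instr Halt (pc, m) = (pc, m)"

definition step :: "instr list \<Rightarrow> config \<Rightarrow> config" where
  "step p c = (if fst c < length p then exec_instr (p ! fst c) c else c)"

definition run :: "instr list \<Rightarrow> nat \<Rightarrow> config \<Rightarrow> config" where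
  "run p t c = (step p ^^ t) c"

definition halted :: "instr list \<Rightarrow> config \<Rightarrow> bool" where
  "halted p c \<longleftrightarrow> fst c < length p \<and> p ! fst c = Halt"

text \<open>Input encoding: cell 0 holds n, cell 1 holds kappa, the entry a_{i,j} (i,j in [n])
  is in cell 2 + (i-1)*n + (j-1); all other cells are 0. Output: cell 0 (1 = yes, 0 = no).\<close>
definition init_mem :: "nat \<Rightarrow> real \<Rightarrow> (nat \<Rightarrow> nat \<Rightarrow> real) \<Rightarrow> nat \<Rightarrow> real" where
  "init_mem n \<kappa> M k =
     (if k = 0 then real n
      else if k = 1 then \<kappa>
      else if k < 2 + n * n then M ((k - 2) div n + 1) ((k - 2) mod n + 1)
      else 0)"

end

theory Submission
  imports Defs
begin

text \<open>A network directly hosts \<kappa> M iff it has at least \<open>\<lceil>\<kappa> (2n - 1) M u v\<rceil>\<close> arcs from u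
  to v for all u, v. A nonnegative integer matrix whose row and column sums are at most r can be
  increased entrywise to one whose row and column sums are all r: while some row sum is below r, so
  is some column sum, and one arc from that row to that column can be added. Hence a suitable
  (2n - 1)-regular network exists iff the matrix of these ceilings has all its 2n line sums at
  most 2n - 1. The program decides this by computing each ceiling, capped at 2n - 1, with a
  counting loop of 2n - 1 steps; over the n^2 entries, counted once for rows and once for columns,
  this gives O(n^3) steps.\<close>

section \<open>Hosting \<kappa> M by a regular network\<close>

lemma exists_regular_majorant:
  fixes L :: "'a \<Rightarrow> 'a \<Rightarrow> nat"
  assumes "finite I"
    and "\<forall>u\<in>I. (\<Sum>v\<in>I. L u v) \<le> r" and "\<forall>v\<in>I. (\<Sum>u\<in>I. L u v) \<le> r"
  shows "\<exists>m. (\<forall>u\<in>I. \<forall>v\<in>I. L u v \<le> m u v) \<and>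
             (\<forall>u\<in>I. (\<Sum>v\<in>I. m u v) = r) \<and> (\<forall>v\<in>I. (\<Sum>u\<in>I. m u v) = r)"
  using assms(2,3)
proof (induction "card I * r - (\<Sum>u\<in>I. \<Sum>v\<in>I. L u v)" arbitrary: L rule: less_induct)
  case (less L)
  let ?row = "\<lambda>u. \<Sum>v\<in>I. L u v" and ?col = "\<lambda>v. \<Sum>u\<in>I. L u v"
  have total_row: "(\<Sum>u\<in>I. ?row u) \<le> card I * r" and total_col: "(\<Sum>v\<in>I. ?col v) \<le> card I * r"
    using sum_mono[of I ?row "\<lambda>_. r"] sum_mono[of I ?col "\<lambda>_. r"] less.prems by auto
  have swap: "(\<Sum>v\<in>I. ?col v) = (\<Sum>u\<in>I. ?row u)" by (rule sum.swap)
  show ?case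
  proof (cases "(\<Sum>u\<in>I. ?row u) = card I * r")
    case True
    have "\<forall>u\<in>I. ?row u = r"
      using sum_strict_mono_ex1[OF assms(1), of ?row "\<lambda>_. r"] less.prems(1) True by force
    moreover have "\<forall>v\<in>I. ?col v = r"
      using sum_strict_mono_ex1[OF assms(1), of ?col "\<lambda>_. r"] less.prems(2) True swap by force
    ultimately show ?thesis by blast
  next
    case False
    \<comment> \<open>rows and columns have the same total, so some row and some column are both underfull\<close>
    have "\<not> (\<forall>u\<in>I. r \<le> ?row u)" "\<not> (\<forall>v\<in>I. r \<le> ?col v)"
      using False total_row sum_bounded_below[of I r ?row] sum_bounded_below[of I r ?col] swap
      by (auto simp: mult.commute)
    then obtain u v where u: "u \<in> I" "?row u < r" and v: "v \<in> I" "?col v < r"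
      by (auto simp: not_le)
    define L' where "L' a b = L a b + of_bool (a = u \<and> b = v)" for a b
    have row': "(\<Sum>b\<in>I. L' a b) = ?row a + of_bool (a = u)" for a
      using v(1) assms(1) by (simp add: L'_def sum.distrib)
    have col': "(\<Sum>a\<in>I. L' a b) = ?col b + of_bool (b = v)" for b
      using u(1) assms(1) by (simp add: L'_def sum.distrib)
    have "(\<Sum>a\<in>I. \<Sum>b\<in>I. L' a b) = (\<Sum>a\<in>I. ?row a) + 1"
      using u(1) assms(1) by (simp add: row' sum.distrib)
    then have "card I * r - (\<Sum>a\<in>I. \<Sum>b\<in>I. L' a b) < card I * r - (\<Sum>a\<in>I. ?row a)"
      using False total_row by linarith
    moreover have "\<forall>a\<in>I. (\<Sum>b\<in>I. L' a b) \<le> r" "\<forall>b\<in>I. (\<Sum>a\<in>I. L' a b) \<le> r"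
      using row' col' u v less.prems by auto
    ultimately obtain m where m: "\<forall>a\<in>I. \<forall>b\<in>I. L' a b \<le> m a b"
      "\<forall>a\<in>I. (\<Sum>b\<in>I. m a b) = r" "\<forall>b\<in>I. (\<Sum>a\<in>I. m a b) = r"
      using less.hyps by blast
    have "\<forall>a\<in>I. \<forall>b\<in>I. L a b \<le> m a b"
      using m(1) by (fastforce simp: L'_def)
    with m show ?thesis by blast
  qed
qed

text \<open>For 0 \<le> x \<le> T, \<open>count_less x 0 T = \<lceil>x\<rceil>\<close>; the program computes it by testing j < x
  for j = 0, ..., T - 1.\<close>
definition count_less :: "real \<Rightarrow> nat \<Rightarrow> nat \<Rightarrow> nat" where
  "count_less x k T = card {j. k \<le> j \<and> j < T \<and> real j < x}"

lemma count_less_le_iff: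
  assumes "x \<le> real T"
  shows "count_less x 0 T \<le> m \<longleftrightarrow> x \<le> real m"
proof
  assume "count_less x 0 T \<le> m"
  show "x \<le> real m"
  proof (rule ccontr)
    assume "\<not> x \<le> real m"
    then have "{0..m} \<subseteq> {j. 0 \<le> j \<and> j < T \<and> real j < x}"
      using assms by auto
    then have "Suc m \<le> count_less x 0 T"
      unfolding count_less_def using card_mono[of _ "{0..m}"] by fastforce
    with \<open>count_less x 0 T \<le> m\<close> show False by simp
  qed
next
  assume "x \<le> real m"
  then have "{j. 0 \<le> j \<and> j < T \<and> real j < x} \<subseteq> {..<m}" by auto
  then show "count_less x 0 T \<le> m"
    unfolding count_less_def using card_mono[of "{..<m}"] by fastforce
qed

lemma count_less_le: "count_less x 0 T \<le> T"
proof -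
  have "{j. 0 \<le> j \<and> j < T \<and> real j < x} \<subseteq> {..<T}" by auto
  then show ?thesis
    unfolding count_less_def using card_mono[of "{..<T}"] by fastforce
qed

lemma count_less_from_end: "T \<le> k \<Longrightarrow> count_less x k T = 0"
  unfolding count_less_def by simp

lemma count_less_from_Suc:
  assumes "k < T"
  shows "count_less x k T = of_bool (real k < x) + count_less x (Suc k) T"
proof -
  have "{j. k \<le> j \<and> j < T \<and> real j < x} =
        (if real k < x then {k} else {}) \<union> {j. Suc k \<le> j \<and> j < T \<and> real j < x}"
    using assms by (auto simp: le_less Suc_le_eq)
  then show ?thesis unfolding count_less_def by (simp add: card_insert_if)
qed

lemma doubly_stochastic_entry_bounds:
  assumes "doubly_stochastic n M" "u \<in> {1..n}" "v \<in> {1..n}"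
  shows "0 \<le> M u v" "M u v \<le> 1"
proof -
  show "0 \<le> M u v" using assms unfolding doubly_stochastic_def by auto
  have "M u v \<le> (\<Sum>j\<in>{1..n}. M u j)"
    using assms unfolding doubly_stochastic_def by (intro member_le_sum) auto
  then show "M u v \<le> 1" using assms unfolding doubly_stochastic_def by auto
qed

lemma le_direct_throughput_iff:
  assumes ds: "doubly_stochastic n M" and "1 \<le> n" and "0 \<le> \<kappa>"
  shows "\<kappa> \<le> direct_throughput n mult M \<longleftrightarrow> directly_hosts n mult (\<lambda>u v. \<kappa> * M u v)"
proof -
  define S where "S = {\<theta>. 0 \<le> \<theta> \<and> directly_hosts n mult (\<lambda>u v. \<theta> * M u v)}"
  let ?cap = "\<lambda>u v. real (mult u v) / real (2 * n - 1)"
  have bound: "\<theta> \<le> ?cap u v / M u v" if "\<theta> \<in> S" "u \<in> {1..n}" "v \<in> {1..n}" "0 < M u v" for \<theta> u v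
  proof -
    have "\<theta> * M u v \<le> ?cap u v" using that by (simp add: S_def directly_hosts_def)
    then show ?thesis using pos_le_divide_eq[OF \<open>0 < M u v\<close>] by blast
  qed
  have "0 \<in> S" by (simp add: S_def directly_hosts_def)
  obtain v where v: "v \<in> {1..n}" "M 1 v \<noteq> 0"
    using ds \<open>1 \<le> n\<close> unfolding doubly_stochastic_def
    by (metis (no_types, lifting) atLeastAtMost_iff le_refl sum.neutral zero_neq_one)
  then have "0 < M 1 v"
    using doubly_stochastic_entry_bounds(1)[OF ds, of 1 v] \<open>1 \<le> n\<close> by simp
  then have "bdd_above S"
    using bound[of _ 1 v] v \<open>1 \<le> n\<close> by (intro bdd_aboveI[of _ "?cap 1 v / M 1 v"]) auto
  show ?thesis
  proof
    assume \<kappa>: "\<kappa> \<le> direct_throughput n mult M"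
    have "\<kappa> * M u v \<le> ?cap u v" if uv: "u \<in> {1..n}" "v \<in> {1..n}" for u v
    proof (cases "M u v = 0")
      case False
      then have "0 < M u v" using doubly_stochastic_entry_bounds(1)[OF ds uv] by simp
      have "Sup S \<le> ?cap u v / M u v"
        using bound[OF _ uv \<open>0 < M u v\<close>] \<open>0 \<in> S\<close> by (intro cSup_least) auto
      then have "\<kappa> \<le> ?cap u v / M u v"
        using \<kappa> by (simp add: direct_throughput_def S_def)
      then show ?thesis using pos_le_divide_eq[OF \<open>0 < M u v\<close>] by blast
    qed simp
    then show "directly_hosts n mult (\<lambda>u v. \<kappa> * M u v)" by (simp add: directly_hosts_def)
  next
    assume "directly_hosts n mult (\<lambda>u v. \<kappa> * M u v)"
    then have "\<kappa> \<in> S" using \<open>0 \<le> \<kappa>\<close> by (simp add: S_def)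
    then show "\<kappa> \<le> direct_throughput n mult M"
      unfolding direct_throughput_def S_def[symmetric] using \<open>bdd_above S\<close> by (rule cSup_upper)
  qed
qed

text \<open>The least number \<open>\<lceil>\<kappa> (2n - 1) M u v\<rceil>\<close> of arcs from u to v that hosts \<kappa> M u v, with
  the factors in the order in which the program multiplies them.\<close>
definition required_arcs :: "nat \<Rightarrow> real \<Rightarrow> (nat \<Rightarrow> nat \<Rightarrow> real) \<Rightarrow> nat \<Rightarrow> nat \<Rightarrow> nat" where
  "required_arcs n \<kappa> M u v = count_less (M u v * (\<kappa> * real (2 * n - 1))) 0 (2 * n - 1)"

lemma required_arcs_le_iff:
  assumes "doubly_stochastic n M" "1 \<le> n" "0 \<le> \<kappa>" "\<kappa> \<le> 1" "u \<in> {1..n}" "v \<in> {1..n}"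
  shows "required_arcs n \<kappa> M u v \<le> m \<longleftrightarrow> \<kappa> * M u v \<le> real m / real (2 * n - 1)"
proof -
  have T: "0 < real (2 * n - 1)" using assms(2) by simp
  have "M u v * (\<kappa> * real (2 * n - 1)) \<le> 1 * (1 * real (2 * n - 1))"
    using doubly_stochastic_entry_bounds[OF assms(1,5,6)] assms(3,4) T by (intro mult_mono) auto
  then have "required_arcs n \<kappa> M u v \<le> m \<longleftrightarrow> M u v * (\<kappa> * real (2 * n - 1)) \<le> real m"
    unfolding required_arcs_def by (intro count_less_le_iff) simp
  also have "\<dots> \<longleftrightarrow> \<kappa> * M u v \<le> real m / real (2 * n - 1)"
    using T by (simp add: pos_le_divide_eq mult_ac)
  finally show ?thesis .
qed

lemma exists_regular_network_iff:
  assumes ds: "doubly_stochastic n M" and "1 \<le> n" "0 \<le> \<kappa>" "\<kappa> \<le> 1"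
  shows "(\<exists>mult. directed_regular n (2 * n - 1) mult \<and> \<kappa> \<le> direct_throughput n mult M) \<longleftrightarrow>
     (\<forall>u\<in>{1..n}. (\<Sum>v\<in>{1..n}. required_arcs n \<kappa> M u v) \<le> 2 * n - 1) \<and>
     (\<forall>v\<in>{1..n}. (\<Sum>u\<in>{1..n}. required_arcs n \<kappa> M u v) \<le> 2 * n - 1)"
proof -
  have hosts_iff: "\<kappa> \<le> direct_throughput n mult M \<longleftrightarrow>
      (\<forall>u\<in>{1..n}. \<forall>v\<in>{1..n}. required_arcs n \<kappa> M u v \<le> mult u v)" for mult
    using assms by (simp add: le_direct_throughput_iff directly_hosts_def required_arcs_le_iff)
  show ?thesis
  proof
    assume "\<exists>mult. directed_regular n (2 * n - 1) mult \<and> \<kappa> \<le> direct_throughput n mult M"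
    then obtain mult where reg: "directed_regular n (2 * n - 1) mult"
      and le: "\<forall>u\<in>{1..n}. \<forall>v\<in>{1..n}. required_arcs n \<kappa> M u v \<le> mult u v"
      using hosts_iff by blast
    have "(\<Sum>v\<in>{1..n}. required_arcs n \<kappa> M u v) \<le> (\<Sum>v\<in>{1..n}. mult u v)"
      "(\<Sum>v\<in>{1..n}. required_arcs n \<kappa> M v u) \<le> (\<Sum>v\<in>{1..n}. mult v u)"
      if "u \<in> {1..n}" for u
      using le that by (auto intro!: sum_mono)
    with reg show "(\<forall>u\<in>{1..n}. (\<Sum>v\<in>{1..n}. required_arcs n \<kappa> M u v) \<le> 2 * n - 1) \<and>
        (\<forall>v\<in>{1..n}. (\<Sum>u\<in>{1..n}. required_arcs n \<kappa> M u v) \<le> 2 * n - 1)"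
      unfolding directed_regular_def by fastforce
  next
    assume "(\<forall>u\<in>{1..n}. (\<Sum>v\<in>{1..n}. required_arcs n \<kappa> M u v) \<le> 2 * n - 1) \<and>
        (\<forall>v\<in>{1..n}. (\<Sum>u\<in>{1..n}. required_arcs n \<kappa> M u v) \<le> 2 * n - 1)"
    then obtain mult where "\<forall>u\<in>{1..n}. \<forall>v\<in>{1..n}. required_arcs n \<kappa> M u v \<le> mult u v"
      "\<forall>u\<in>{1..n}. (\<Sum>v\<in>{1..n}. mult u v) = 2 * n - 1"
      "\<forall>v\<in>{1..n}. (\<Sum>u\<in>{1..n}. mult u v) = 2 * n - 1"
      using exists_regular_majorant[of "{1..n}" "required_arcs n \<kappa> M" "2 * n - 1"] by blast
    then show "\<exists>mult. directed_regular n (2 * n - 1) mult \<and> \<kappa> \<le> direct_throughput n mult M"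
      using hosts_iff unfolding directed_regular_def by blast
  qed
qed

section \<open>Runs of the machine\<close>

lemma run_0 [simp]: "run p 0 c = c"
  by (simp add: run_def)

lemma run_Suc: "run p (Suc t) c = run p t (step p c)"
  unfolding run_def funpow_Suc_right by simp

lemma run_numeral: "run p (numeral k) c = run p (pred_numeral k) (step p c)"
  by (simp add: numeral_eq_Suc run_Suc)

lemma run_add: "run p (t1 + t2) c = run p t2 (run p t1 c)"
  by (metis add.commute comp_apply funpow_add run_def)

definition reach :: "instr list \<Rightarrow> config \<Rightarrow> nat \<Rightarrow> (config \<Rightarrow> bool) \<Rightarrow> bool" where
  "reach p c T Q \<longleftrightarrow> (\<exists>t\<le>T. Q (run p t c))"

lemma reach_now: "Q c \<Longrightarrow> reach p c T Q"
  unfolding reach_def by (metis le0 run_0)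

lemma reach_mono: "reach p c T Q \<Longrightarrow> T \<le> T' \<Longrightarrow> (\<And>c. Q c \<Longrightarrow> Q' c) \<Longrightarrow> reach p c T' Q'"
  unfolding reach_def by (meson order_trans)

lemma reach_run: "run p k c = c' \<Longrightarrow> reach p c' T Q \<Longrightarrow> reach p c (k + T) Q"
  unfolding reach_def by (metis add_le_cancel_left run_add)

lemma reach_by_run: "run p k c = c' \<Longrightarrow> Q c' \<Longrightarrow> k \<le> T \<Longrightarrow> reach p c T Q"
  unfolding reach_def by blast

lemma reach_trans:
  "reach p c T1 P \<Longrightarrow> (\<And>c'. P c' \<Longrightarrow> reach p c' T2 Q) \<Longrightarrow> reach p c (T1 + T2) Q"
  unfolding reach_def by (metis add_le_mono run_add)

text \<open>The registers of a program are fixed cells, but the input occupies the cells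
  0, ..., n^2 + 1. So the program first moves the matrix up by H = 8 n^2, using only cells 0 and 1
  as registers until cells 2, ..., 23 are saved. Cell 1 is needed at once, so \<kappa> is parked in
  cell n, overwriting the entry M 1 (n - 1); that entry is restored afterwards as 1 minus the other
  entries of the first row. The number in each comment is the address of the instruction after it.\<close>
definition prog :: "instr list" where
  "prog = [
    \<comment> \<open>0: park \<kappa> in cell n; n = 1 is always a yes-instance\<close>
    Store 0 1, LoadConst 1 1, JumpLeq 0 1 120,
    \<comment> \<open>3: cell 1 := H, cell H := n\<close>
    Mul 1 0 0, Add 1 1 1, Add 1 1 1, Add 1 1 1, Store 1 0,
    \<comment> \<open>8: save cells 2, ..., 23 in cells H + 2, ..., H + 23\<close>
    LoadConst 0 1, Add 1 1 0,
    Add 1 1 0, Store 1 2, Add 1 1 0, Store 1 3, Add 1 1 0, Store 1 4, Add 1 1 0, Store 1 5,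
    Add 1 1 0, Store 1 6, Add 1 1 0, Store 1 7, Add 1 1 0, Store 1 8, Add 1 1 0, Store 1 9,
    Add 1 1 0, Store 1 10, Add 1 1 0, Store 1 11, Add 1 1 0, Store 1 12, Add 1 1 0, Store 1 13,
    Add 1 1 0, Store 1 14, Add 1 1 0, Store 1 15, Add 1 1 0, Store 1 16, Add 1 1 0, Store 1 17,
    Add 1 1 0, Store 1 18, Add 1 1 0, Store 1 19, Add 1 1 0, Store 1 20, Add 1 1 0, Store 1 21,
    Add 1 1 0, Store 1 22, Add 1 1 0, Store 1 23,
    \<comment> \<open>54: cell 2 := n, 3 := 1, 4 := 24, 5 := n^2 + 2\<close>
    LoadConst 0 23, Sub 1 1 0, Load 2 1, LoadConst 3 1, LoadConst 4 24,
    Mul 5 2 2, Add 5 5 3, Add 5 5 3,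
    \<comment> \<open>62: copy cells 24, ..., n^2 + 1 to cells H + 24, ...\<close>
    JumpLeq 5 4 68, Load 6 4, Add 0 1 4, Store 0 6, Add 4 4 3, Jump 62,
    \<comment> \<open>68: cell 7 := T = 2n - 1, 9 := \<kappa>, 13 := 0, 4 := 2, 5 := n + 2\<close>
    Add 7 2 2, Sub 7 7 3, Add 0 1 2, Load 9 0, LoadConst 13 0, LoadConst 4 2,
    Add 5 2 3, Add 5 5 3,
    \<comment> \<open>76: cell 13 := sum of cells H + 2, ..., H + n + 1\<close>
    JumpLeq 5 4 82, Add 0 1 4, Load 6 0, Add 13 13 6, Add 4 4 3, Jump 76,
    \<comment> \<open>82: restore cell H + n; cell 8 := \<kappa> T, 19 := H + 2, strides 14 := n, 15 := 1, pass 16 := 0\<close>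
    Sub 6 3 13, Add 6 6 9, Add 0 1 2, Store 0 6,
    Mul 8 9 7, Add 19 1 3, Add 19 19 3, Mul 14 2 3, LoadConst 15 1, LoadConst 16 0,
    \<comment> \<open>92: for u = cell 10 < n: cell 13 := 0\<close>
    LoadConst 10 0,
    JumpLeq 2 10 115, LoadConst 13 0, LoadConst 11 0,
    \<comment> \<open>96: for v = cell 11 < n: cell 17 := \<kappa> T times cell H + 2 + u * cell 14 + v * cell 15\<close>
    JumpLeq 2 11 111, Mul 18 10 14, Mul 0 11 15, Add 18 18 0, Add 18 18 19, Load 17 18,
    Mul 17 17 8, LoadConst 12 0,
    \<comment> \<open>104: add to cell 13 the number of j = cell 12 < T with j < cell 17\<close>
    JumpLeq 7 12 109, JumpLeq 17 12 107, Add 13 13 3, Add 12 12 3, Jump 104,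
    \<comment> \<open>109: next v\<close>
    Add 11 11 3, Jump 96,
    \<comment> \<open>111: reject if cell 13 > T, else next u\<close>
    JumpLeq 13 7 113, Jump 122, Add 10 10 3, Jump 93,
    \<comment> \<open>115: after the pass over rows, pass over columns with strides 1 and n\<close>
    JumpLeq 3 16 120, LoadConst 16 1, LoadConst 14 1, Mul 15 2 3, Jump 92,
    \<comment> \<open>120: accept\<close>
    LoadConst 0 1, Halt,
    \<comment> \<open>122: reject\<close>
    LoadConst 0 0, Halt]"

lemma of_nat_add_in_Nats: "real x + real y \<in> \<nat>"
  by (metis of_nat_add of_nat_in_Nats)

lemma nat_floor_of_nat_add: "nat \<lfloor>real x + real y\<rfloor> = x + y"
  by (metis of_nat_add floor_of_nat nat_int)

lemmas prog_exec = run_numeral run_Suc step_def prog_def of_nat_add_in_Nats nat_floor_of_nat_add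
  nat_int_add

lemma load_nat_address: "m a = real k \<Longrightarrow> exec_instr (Load d a) (pc, m) = (Suc pc, m(d := m k))"
  by simp

lemma store_nat_address: "m d = real k \<Longrightarrow> exec_instr (Store d a) (pc, m) = (Suc pc, m(k := m a))"
  by simp

lemma init_mem_0 [simp]: "init_mem n \<kappa> M 0 = real n"
  by (simp add: init_mem_def)

lemma init_mem_1 [simp]: "init_mem n \<kappa> M (Suc 0) = \<kappa>"
  by (simp add: init_mem_def)

lemma halted_prog_iff: "halted prog (pc, m) \<longleftrightarrow> pc = 121 \<or> pc = 123"
  by (auto simp: halted_def prog_def nth_Cons' split: if_splits)

section \<open>Moving the matrix\<close>

definition saved_low_cells :: "nat \<Rightarrow> nat \<Rightarrow> (nat \<Rightarrow> real) \<Rightarrow> nat \<Rightarrow> (nat \<Rightarrow> real) \<Rightarrow> bool" where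
  "saved_low_cells n H im i m \<longleftrightarrow> m 0 = 1 \<and> m 1 = real (H + i - 1) \<and> m H = real n \<and>
     (\<forall>j. 2 \<le> j \<and> j < H \<longrightarrow> m j = im j) \<and> (\<forall>j. 2 \<le> j \<and> j < i \<longrightarrow> m (H + j) = im j)"

lemma save_low_cells:
  assumes "2 \<le> i" "i \<le> 24" "saved_low_cells n H im i m" "32 \<le> H"
  shows "reach prog (6 + 2 * i, m) (2 * (24 - i)) (\<lambda>c. fst c = 54 \<and> saved_low_cells n H im 24 (snd c))"
  using assms
proof (induction "24 - i" arbitrary: i m)
  case 0
  then show ?case by (intro reach_now) simp
next
  case (Suc d)
  then have "i < 24" by simp
  then have code: "prog ! (6 + 2 * i) = Add 1 1 0" "prog ! (7 + 2 * i) = Store 1 i"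
    using \<open>2 \<le> i\<close> unfolding prog_def by (auto simp: less_Suc_eq numeral_eq_Suc)
  define m' where "m' = m(1 := real (H + i), H + i := m i)"
  have run: "run prog 2 (6 + 2 * i, m) = (6 + 2 * Suc i, m')"
    using Suc.prems(3) \<open>i < 24\<close> \<open>2 \<le> i\<close>
    by (simp add: run_numeral run_Suc step_def code saved_low_cells_def m'_def nat_int_add)
      (simp add: prog_def)
  have "saved_low_cells n H im (Suc i) m'"
    using Suc.prems(3,4) \<open>i < 24\<close> \<open>2 \<le> i\<close> unfolding saved_low_cells_def m'_def
    by (auto simp: less_Suc_eq)
  then have "reach prog (6 + 2 * Suc i, m') (2 * (24 - Suc i))
      (\<lambda>c. fst c = 54 \<and> saved_low_cells n H im 24 (snd c))"
    using Suc by (intro Suc.hyps) auto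
  moreover have "2 * (24 - i) = 2 + 2 * (24 - Suc i)"
    using \<open>i < 24\<close> by simp
  ultimately show ?case
    using reach_run[OF run] by simp
qed

lemma run_park_and_scale:
  fixes n :: nat and \<kappa> :: real and M :: "nat \<Rightarrow> nat \<Rightarrow> real"
  assumes n: "2 \<le> n" and H: "H = 8 * n * n"
  shows "run prog 10 (0, init_mem n \<kappa> M) =
    (10, (init_mem n \<kappa> M)(n := \<kappa>, H := real n, 0 := 1, 1 := real (H + 1)))"
proof -
  have "32 \<le> H"
    unfolding H using mult_le_mono[OF n n] by simp
  define m where "m = (init_mem n \<kappa> M)(n := \<kappa>, 1 := real H)"
  have "run prog 7 (0, init_mem n \<kappa> M) = (7, m)"
    using n unfolding m_def H by (simp add: prog_exec init_mem_def) (auto simp: fun_eq_iff algebra_simps)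
  moreover have "exec_instr (Store 1 0) (7, m) = (8, m(H := m 0))"
    using store_nat_address[of m 1 H 0 7] by (simp add: m_def)
  then have "run prog 3 (7, m) = (10, m(H := real n, 0 := 1, 1 := real (H + 1)))"
    using n \<open>32 \<le> H\<close> by (simp add: prog_exec) (simp add: m_def init_mem_def add.commute)
  ultimately show ?thesis
    using run_add[of prog 7 3] \<open>32 \<le> H\<close> by (auto simp: m_def fun_eq_iff)
qed

lemma run_after_save:
  assumes "m 1 = real (H + 23)" "m H = real n" "32 \<le> H"
  shows "run prog 8 (54, m) =
    (62, m(0 := 23, 1 := real H, 2 := real n, 3 := 1, 4 := 24, 5 := real (n * n + 2)))"
proof -
  define m' where "m' = m(0 := 23, 1 := real H)"
  have "run prog 2 (54, m) = (56, m')"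
    using assms unfolding m'_def by (simp add: prog_exec)
  moreover have "exec_instr (Load 2 1) (56, m') = (57, m'(2 := real n))"
    using load_nat_address[of m' 1 H] assms by (simp add: m'_def)
  then have "run prog 6 (56, m') = (62, m'(2 := real n, 3 := 1, 4 := 24, 5 := real (n * n + 2)))"
    by (simp add: prog_exec del: exec_instr.simps(6))
  ultimately show ?thesis
    using run_add[of prog 2 6 "(54, m)"] by (simp add: m'_def)
qed

lemma prologue:
  fixes n :: nat and \<kappa> :: real and M :: "nat \<Rightarrow> nat \<Rightarrow> real"
  assumes n: "2 \<le> n"
  defines "H \<equiv> 8 * n * n" and "im \<equiv> (init_mem n \<kappa> M)(n := \<kappa>)"
  shows "reach prog (0, init_mem n \<kappa> M) 62 (\<lambda>c. fst c = 62 \<and>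
     snd c 1 = real H \<and> snd c 2 = real n \<and> snd c 3 = 1 \<and> snd c 4 = 24 \<and> snd c 5 = real (n * n + 2) \<and>
     (\<forall>j. 24 \<le> j \<and> j < H \<longrightarrow> snd c j = im j) \<and> (\<forall>j. 2 \<le> j \<and> j < 24 \<longrightarrow> snd c (H + j) = im j))"
    (is "reach _ _ _ ?Q")
proof -
  have "32 \<le> H"
    unfolding H_def using mult_le_mono[OF n n] by simp
  let ?m = "im(H := real n, 0 := 1, 1 := real (H + 1))"
  have "saved_low_cells n H im 2 ?m"
    using \<open>32 \<le> H\<close> unfolding saved_low_cells_def by (intro conjI) auto
  then have save: "reach prog (10, ?m) 44 (\<lambda>c. fst c = 54 \<and> saved_low_cells n H im 24 (snd c))"
    using save_low_cells[of 2 n H im ?m] \<open>32 \<le> H\<close> by simp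
  have finish: "reach prog c 8 ?Q" if at_54: "fst c = 54 \<and> saved_low_cells n H im 24 (snd c)" for c
  proof -
    obtain m where c: "c = (54, m)" and saved: "saved_low_cells n H im 24 m"
      using at_54 by (cases c) auto
    have "run prog 8 c = (62, m(0 := 23, 1 := real H, 2 := real n, 3 := 1, 4 := 24, 5 := real (n * n + 2)))"
      using saved \<open>32 \<le> H\<close> unfolding c saved_low_cells_def by (intro run_after_save) auto
    then show ?thesis
      by (rule reach_by_run) (use saved \<open>32 \<le> H\<close> in \<open>auto simp: saved_low_cells_def\<close>)
  qed
  show ?thesis
    using reach_run[OF run_park_and_scale[OF n refl, of \<kappa> M, folded H_def im_def] reach_trans[OF save finish]]
    by simp
qed

lemma copy_loop:
  assumes "m 1 = real H" "m 3 = 1" "m 5 = real L" "m 4 = real a" "L \<le> H" "24 \<le> a" "32 \<le> H"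
  shows "reach prog (62, m) (6 * (L - a) + 1) (\<lambda>c. fst c = 68 \<and>
     (\<forall>x. x \<notin> {0, 4, 6} \<and> (x < H + a \<or> H + L \<le> x) \<longrightarrow> snd c x = m x) \<and>
     (\<forall>j. a \<le> j \<and> j < L \<longrightarrow> snd c (H + j) = m j))"
  using assms
proof (induction "L - a" arbitrary: a m)
  case 0
  then have "run prog 1 (62, m) = (68, m)" by (simp add: prog_exec)
  then show ?case by (rule reach_by_run) (use 0 in auto)
next
  case (Suc d)
  define m' where "m' = m(6 := m a, 0 := real H + real a, H + a := m a, 4 := real a + 1)"
  have "a < L" using Suc.hyps(2) by simp
  have run: "run prog 6 (62, m) = (62, m')"
    using Suc.prems \<open>a < L\<close> unfolding m'_def by (simp add: prog_exec)
  have "reach prog (62, m') (6 * (L - Suc a) + 1) (\<lambda>c. fst c = 68 \<and>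
     (\<forall>x. x \<notin> {0, 4, 6} \<and> (x < H + Suc a \<or> H + L \<le> x) \<longrightarrow> snd c x = m' x) \<and>
     (\<forall>j. Suc a \<le> j \<and> j < L \<longrightarrow> snd c (H + j) = m' j))"
    using Suc by (intro Suc.hyps) (auto simp: m'_def)
  from reach_run[OF run this] show ?case
  proof (rule reach_mono)
    show "6 + (6 * (L - Suc a) + 1) \<le> 6 * (L - a) + 1" using \<open>a < L\<close> by simp
  next
    fix c :: config
    assume c: "fst c = 68 \<and>
     (\<forall>x. x \<notin> {0, 4, 6} \<and> (x < H + Suc a \<or> H + L \<le> x) \<longrightarrow> snd c x = m' x) \<and>
     (\<forall>j. Suc a \<le> j \<and> j < L \<longrightarrow> snd c (H + j) = m' j)"
    have "snd c (H + j) = m j" if "a \<le> j" "j < L" for j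
      using c that Suc.prems by (cases "j = a") (auto simp: m'_def)
    with c Suc.prems \<open>a < L\<close> show "fst c = 68 \<and>
     (\<forall>x. x \<notin> {0, 4, 6} \<and> (x < H + a \<or> H + L \<le> x) \<longrightarrow> snd c x = m x) \<and>
     (\<forall>j. a \<le> j \<and> j < L \<longrightarrow> snd c (H + j) = m j)"
      by (auto simp: m'_def)
  qed
qed

lemma sum_loop:
  assumes "m 1 = real H" "m 3 = 1" "m 5 = real L" "m 4 = real a" "32 \<le> H"
  shows "reach prog (76, m) (6 * (L - a) + 1) (\<lambda>c. fst c = 82 \<and>
     (\<forall>y. y \<notin> {0, 4, 6, 13} \<longrightarrow> snd c y = m y) \<and> snd c 13 = m 13 + (\<Sum>j\<in>{a..<L}. m (H + j)))"
  using assms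
proof (induction "L - a" arbitrary: a m)
  case 0
  then have "run prog 1 (76, m) = (82, m)" by (simp add: prog_exec)
  then show ?case by (rule reach_by_run) (use 0 in auto)
next
  case (Suc d)
  define m' where "m' = m(0 := real H + real a, 6 := m (H + a), 13 := m 13 + m (H + a), 4 := real a + 1)"
  have "a < L" using Suc.hyps(2) by simp
  have run: "run prog 6 (76, m) = (76, m')"
    using Suc.prems \<open>a < L\<close> unfolding m'_def by (simp add: prog_exec)
  have "reach prog (76, m') (6 * (L - Suc a) + 1) (\<lambda>c. fst c = 82 \<and>
     (\<forall>y. y \<notin> {0, 4, 6, 13} \<longrightarrow> snd c y = m' y) \<and> snd c 13 = m' 13 + (\<Sum>j\<in>{Suc a..<L}. m' (H + j)))"
    using Suc by (intro Suc.hyps) (auto simp: m'_def)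
  from reach_run[OF run this] show ?case
  proof (rule reach_mono)
    show "6 + (6 * (L - Suc a) + 1) \<le> 6 * (L - a) + 1" using \<open>a < L\<close> by simp
  next
    have "m' (H + j) = m (H + j)" for j
      using Suc.prems unfolding m'_def by auto
    moreover have "(\<Sum>j\<in>{a..<L}. m (H + j)) = m (H + a) + (\<Sum>j\<in>{Suc a..<L}. m (H + j))"
      using \<open>a < L\<close> by (simp add: sum.atLeast_Suc_lessThan)
    ultimately show "fst c = 82 \<and>
     (\<forall>y. y \<notin> {0, 4, 6, 13} \<longrightarrow> snd c y = m y) \<and> snd c 13 = m 13 + (\<Sum>j\<in>{a..<L}. m (H + j))"
      if "fst c = 82 \<and>
     (\<forall>y. y \<notin> {0, 4, 6, 13} \<longrightarrow> snd c y = m' y) \<and> snd c 13 = m' 13 + (\<Sum>j\<in>{Suc a..<L}. m' (H + j))"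
      for c
      using that by (simp add: m'_def)
  qed
qed

lemma matrix_index_less:
  fixes u v n :: nat
  assumes "u < n" "v < n"
  shows "u * n + v < n * n"
proof -
  have "u * n + v < (u + 1) * n" using assms by simp
  also have "\<dots> \<le> n * n" using assms by (intro mult_right_mono) auto
  finally show ?thesis .
qed

lemma init_mem_entry:
  assumes "u < n" "v < n"
  shows "init_mem n \<kappa> M (2 + u * n + v) = M (u + 1) (v + 1)"
proof -
  have "u * n + v < n * n" using matrix_index_less[OF assms] .
  moreover have "(u * n + v) div n = u" "(u * n + v) mod n = v" using assms by auto
  ultimately show ?thesis unfolding init_mem_def by simp
qed

lemma init_mem_first_row_sum:
  assumes "doubly_stochastic n M" "1 \<le> n"
  shows "(\<Sum>j\<in>{2..<n + 2}. init_mem n \<kappa> M j) = 1"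
proof -
  have "(\<Sum>j\<in>{2..<n + 2}. init_mem n \<kappa> M j) = (\<Sum>v\<in>{1..n}. init_mem n \<kappa> M (2 + 0 * n + (v - 1)))"
    by (rule sum.reindex_bij_witness[where i="\<lambda>v. v + 1" and j="\<lambda>j. j - 1"])
      (auto intro!: arg_cong[where f = "init_mem n \<kappa> M"])
  also have "\<dots> = (\<Sum>v\<in>{1..n}. M 1 v)"
  proof (rule sum.cong[OF refl])
    fix v assume "v \<in> {1..n}"
    then have "v - 1 < n" "v - 1 + 1 = v" by auto
    then show "init_mem n \<kappa> M (2 + 0 * n + (v - 1)) = M 1 v"
      using init_mem_entry[of 0 n "v - 1" \<kappa> M] assms(2) by simp
  qed
  also have "\<dots> = 1"
    using assms(1,2) unfolding doubly_stochastic_def by auto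
  finally show ?thesis .
qed

lemma sum_fun_upd:
  fixes f :: "'a \<Rightarrow> 'b::ab_group_add"
  assumes "finite A" "x \<in> A"
  shows "sum (f(x := y)) A = sum f A - f x + y"
  using sum.remove[OF assms, of "f(x := y)"] sum.remove[OF assms, of f]
  by (simp add: sum.cong[OF refl, of "A - {x}" "f(x := y)" f])

lemma relocation:
  fixes n :: nat and \<kappa> :: real and M :: "nat \<Rightarrow> nat \<Rightarrow> real"
  assumes n: "2 \<le> n"
  defines "H \<equiv> 8 * n * n" and "im \<equiv> (init_mem n \<kappa> M)(n := \<kappa>)"
  shows "reach prog (0, init_mem n \<kappa> M) (62 + (6 * (n * n + 2 - 24) + 1)) (\<lambda>c. fst c = 68 \<and>
     snd c 1 = real H \<and> snd c 2 = real n \<and> snd c 3 = 1 \<and>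
     (\<forall>j. 2 \<le> j \<and> j < n * n + 2 \<longrightarrow> snd c (H + j) = im j))"
proof -
  have "32 \<le> H" "n * n + 2 \<le> H"
    unfolding H_def using mult_le_mono[OF n n] by simp_all
  have "reach prog c (6 * (n * n + 2 - 24) + 1) (\<lambda>c. fst c = 68 \<and>
     snd c 1 = real H \<and> snd c 2 = real n \<and> snd c 3 = 1 \<and>
     (\<forall>j. 2 \<le> j \<and> j < n * n + 2 \<longrightarrow> snd c (H + j) = im j))"
    if "fst c = 62" "snd c 1 = real H" "snd c 2 = real n" "snd c 3 = 1" "snd c 4 = 24"
      "snd c 5 = real (n * n + 2)" "\<forall>j. 24 \<le> j \<and> j < H \<longrightarrow> snd c j = im j"
      "\<forall>j. 2 \<le> j \<and> j < 24 \<longrightarrow> snd c (H + j) = im j" for c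
  proof -
    obtain m where c: "c = (62, m)" using \<open>fst c = 62\<close> by (cases c) auto
    have m: "m 1 = real H" "m 2 = real n" "m 3 = 1" "m 4 = 24" "m 5 = real (n * n + 2)"
      "\<forall>j. 24 \<le> j \<and> j < H \<longrightarrow> m j = im j" "\<forall>j. 2 \<le> j \<and> j < 24 \<longrightarrow> m (H + j) = im j"
      using that unfolding c by auto
    show ?thesis
      unfolding c
    proof (rule reach_mono[OF copy_loop[of m H "n * n + 2" 24]])
      fix c' :: config
      assume c': "fst c' = 68 \<and>
        (\<forall>x. x \<notin> {0, 4, 6} \<and> (x < H + 24 \<or> H + (n * n + 2) \<le> x) \<longrightarrow> snd c' x = m x) \<and>
        (\<forall>j. 24 \<le> j \<and> j < n * n + 2 \<longrightarrow> snd c' (H + j) = m j)"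
      have "snd c' (H + j) = im j" if "2 \<le> j" "j < n * n + 2" for j
        using c' m that \<open>32 \<le> H\<close> \<open>n * n + 2 \<le> H\<close> by (cases "j < 24") auto
      with c' m \<open>32 \<le> H\<close> show "fst c' = 68 \<and> snd c' 1 = real H \<and> snd c' 2 = real n \<and> snd c' 3 = 1 \<and>
        (\<forall>j. 2 \<le> j \<and> j < n * n + 2 \<longrightarrow> snd c' (H + j) = im j)"
        by auto
    qed (use m \<open>32 \<le> H\<close> \<open>n * n + 2 \<le> H\<close> in auto)
  qed
  with prologue[OF n, of \<kappa> M] show ?thesis
    unfolding H_def im_def by (rule reach_trans) auto
qed

definition matrix_loaded :: "nat \<Rightarrow> real \<Rightarrow> (nat \<Rightarrow> nat \<Rightarrow> real) \<Rightarrow> nat \<Rightarrow> (nat \<Rightarrow> real) \<Rightarrow> bool" where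
  "matrix_loaded n \<kappa> M B m \<longleftrightarrow> m 2 = real n \<and> m 3 = 1 \<and> m 7 = real (2 * n - 1) \<and>
     m 8 = \<kappa> * real (2 * n - 1) \<and> m 19 = real B \<and>
     (\<forall>u v. u < n \<and> v < n \<longrightarrow> m (B + u * n + v) = M (u + 1) (v + 1))"

lemma run_before_row_sum:
  assumes "m 1 = real H" "m 2 = real n" "m 3 = 1" "m (H + n) = \<kappa>" "32 \<le> H"
  shows "run prog 8 (68, m) =
    (76, m(7 := 2 * real n - 1, 0 := real (H + n), 9 := \<kappa>, 13 := 0, 4 := 2, 5 := real (n + 2)))"
  using assms by (simp add: prog_exec)

lemma run_after_row_sum:
  assumes "m 1 = real H" "m 2 = real n" "m 3 = 1" "m 7 = 2 * real n - 1" "m 9 = \<kappa>" "32 \<le> H"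
  shows "run prog 10 (82, m) = (92, m(6 := 1 - m 13 + \<kappa>, 0 := real (H + n), H + n := 1 - m 13 + \<kappa>,
    8 := \<kappa> * (2 * real n - 1), 19 := real (H + 2), 14 := real n, 15 := 1, 16 := 0))"
  using assms by (simp add: prog_exec)

text \<open>The program sums the cells 2, ..., n + 1 of the input, that is, the first row of M with \<kappa> in
  place of the entry in cell n.\<close>
lemma parked_entry_restored:
  assumes "doubly_stochastic n M" "2 \<le> n"
  shows "1 - (\<Sum>j\<in>{2..<n + 2}. ((init_mem n \<kappa> M)(n := \<kappa>)) j) + \<kappa> = init_mem n \<kappa> M n"
proof -
  have "n \<in> {2..<n + 2}" using assms(2) by simp
  then show ?thesis
    using sum_fun_upd[OF finite_atLeastLessThan, of n 2 "n + 2" "init_mem n \<kappa> M" \<kappa>]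
      init_mem_first_row_sum[OF assms(1), of \<kappa>] assms(2)
    by linarith
qed

lemma restore_parked_entry:
  fixes n :: nat and \<kappa> :: real and M :: "nat \<Rightarrow> nat \<Rightarrow> real"
  assumes n: "2 \<le> n" and ds: "doubly_stochastic n M" and "32 \<le> H"
    and m: "m 1 = real H" "m 2 = real n" "m 3 = 1" "m 7 = 2 * real n - 1" "m 9 = \<kappa>"
      "\<forall>j. 2 \<le> j \<and> j < n * n + 2 \<longrightarrow> m (H + j) = ((init_mem n \<kappa> M)(n := \<kappa>)) j"
      "m 13 = (\<Sum>j\<in>{2..<n + 2}. ((init_mem n \<kappa> M)(n := \<kappa>)) j)"
  shows "reach prog (82, m) 10 (\<lambda>c. fst c = 92 \<and>
     matrix_loaded n \<kappa> M (H + 2) (snd c) \<and> snd c 14 = real n \<and> snd c 15 = 1 \<and> snd c 16 = 0)"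
proof -
  have restored: "1 - m 13 + \<kappa> = init_mem n \<kappa> M n"
    using parked_entry_restored[OF ds n] m(7) by simp
  define m' where "m' = m(6 := 1 - m 13 + \<kappa>, 0 := real (H + n), H + n := 1 - m 13 + \<kappa>,
    8 := \<kappa> * (2 * real n - 1), 19 := real (H + 2), 14 := real n, 15 := 1, 16 := 0)"
  have run: "run prog 10 (82, m) = (92, m')"
    unfolding m'_def using m \<open>32 \<le> H\<close> by (intro run_after_row_sum)
  have "m' (H + 2 + u * n + v) = M (u + 1) (v + 1)" if "u < n" "v < n" for u v
  proof -
    have "2 + u * n + v < n * n + 2"
      using matrix_index_less[OF that] by simp
    then have "m' (H + (2 + u * n + v)) = init_mem n \<kappa> M (2 + u * n + v)"
      using m(6)[rule_format, of "2 + u * n + v"] restored \<open>32 \<le> H\<close>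
      by (cases "2 + u * n + v = n") (auto simp: m'_def)
    then show ?thesis
      using init_mem_entry[OF that] by (simp add: add.assoc)
  qed
  then have "matrix_loaded n \<kappa> M (H + 2) m'"
    using m n \<open>32 \<le> H\<close> by (auto simp: matrix_loaded_def m'_def of_nat_diff)
  with run show ?thesis
    by (intro reach_by_run[of prog 10 "(82, m)"]) (auto simp: m'_def)
qed

lemma restore_and_setup:
  fixes n :: nat and \<kappa> :: real and M :: "nat \<Rightarrow> nat \<Rightarrow> real"
  assumes n: "2 \<le> n" and ds: "doubly_stochastic n M" and H: "H = 8 * n * n"
    and m: "m 1 = real H" "m 2 = real n" "m 3 = 1"
      "\<forall>j. 2 \<le> j \<and> j < n * n + 2 \<longrightarrow> m (H + j) = ((init_mem n \<kappa> M)(n := \<kappa>)) j"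
  shows "reach prog (68, m) (8 + (6 * n + 1) + 10) (\<lambda>c. fst c = 92 \<and>
     matrix_loaded n \<kappa> M (H + 2) (snd c) \<and> snd c 14 = real n \<and> snd c 15 = 1 \<and> snd c 16 = 0)"
proof -
  let ?im = "(init_mem n \<kappa> M)(n := \<kappa>)"
  have "32 \<le> H"
    unfolding H using mult_le_mono[OF n n] by simp
  have first_row: "m (H + j) = ?im j" if "j \<in> {2..<n + 2}" for j
  proof -
    from that have "2 \<le> j" "j < n + 2" by auto
    with le_square[of n] have "2 \<le> j \<and> j < n * n + 2" by linarith
    then show ?thesis by (rule m(4)[rule_format])
  qed
  define m1 where "m1 = m(7 := 2 * real n - 1, 0 := real (H + n), 9 := \<kappa>, 13 := 0, 4 := 2, 5 := real (n + 2))"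
  have run: "run prog 8 (68, m) = (76, m1)"
    unfolding m1_def using m first_row[of n] n \<open>32 \<le> H\<close> by (intro run_before_row_sum) auto
  have m1: "m1 (H + j) = m (H + j)" for j
    using \<open>32 \<le> H\<close> by (simp add: m1_def)
  have loop: "reach prog (76, m1) (6 * (n + 2 - 2) + 1) (\<lambda>c. fst c = 82 \<and>
     (\<forall>y. y \<notin> {0, 4, 6, 13} \<longrightarrow> snd c y = m1 y) \<and> snd c 13 = m1 13 + (\<Sum>j\<in>{2..<n + 2}. m1 (H + j)))"
    using m \<open>32 \<le> H\<close> by (intro sum_loop) (simp_all add: m1_def)
  have "reach prog c 10 (\<lambda>c. fst c = 92 \<and>
     matrix_loaded n \<kappa> M (H + 2) (snd c) \<and> snd c 14 = real n \<and> snd c 15 = 1 \<and> snd c 16 = 0)"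
    if at_82: "fst c = 82 \<and> (\<forall>y. y \<notin> {0, 4, 6, 13} \<longrightarrow> snd c y = m1 y) \<and>
      snd c 13 = m1 13 + (\<Sum>j\<in>{2..<n + 2}. m1 (H + j))" for c
  proof -
    obtain m2 where c: "c = (82, m2)" using at_82 by (cases c) auto
    from at_82 have "m2 13 = m1 13 + (\<Sum>j\<in>{2..<n + 2}. m1 (H + j))"
      unfolding c by simp
    also have "m1 13 = 0" by (simp add: m1_def)
    also have "0 + (\<Sum>j\<in>{2..<n + 2}. m1 (H + j)) = (\<Sum>j\<in>{2..<n + 2}. ?im j)"
      unfolding m1 add_0_left using first_row by (rule sum.cong[OF refl])
    finally have sum13: "m2 13 = (\<Sum>j\<in>{2..<n + 2}. ?im j)" .
    have "m2 1 = real H" "m2 2 = real n" "m2 3 = 1" "m2 7 = 2 * real n - 1" "m2 9 = \<kappa>"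
      "\<forall>j. 2 \<le> j \<and> j < n * n + 2 \<longrightarrow> m2 (H + j) = ?im j"
      using at_82 m \<open>32 \<le> H\<close> unfolding c by (auto simp: m1_def)
    from restore_parked_entry[OF n ds \<open>32 \<le> H\<close> this sum13] show ?thesis
      unfolding c .
  qed
  with reach_run[OF run loop] show ?thesis
    by (rule reach_trans[THEN reach_mono]) auto
qed

section \<open>Checking the line sums\<close>

lemma count_loop:
  assumes "m 7 = real T" "m 12 = real k" "m 13 = real s" "m 3 = 1"
  shows "reach prog (104, m) (5 * (T - k) + 1) (\<lambda>c. fst c = 109 \<and>
     (\<forall>y. y \<notin> {12, 13} \<longrightarrow> snd c y = m y) \<and> snd c 13 = real (s + count_less (m 17) k T))"
  using assms
proof (induction "T - k" arbitrary: k s m)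
  case 0
  then have "run prog 1 (104, m) = (109, m)" by (simp add: prog_exec)
  then show ?case by (rule reach_by_run) (use 0 in \<open>auto simp: count_less_from_end\<close>)
next
  case (Suc d)
  then have "k < T" by simp
  define s' where "s' = s + of_bool (real k < m 17)"
  define m' where "m' = m(13 := real s', 12 := real (Suc k))"
  have run: "run prog (4 + of_bool (real k < m 17)) (104, m) = (104, m')"
    using Suc.prems \<open>k < T\<close> unfolding m'_def s'_def
    by (cases "real k < m 17") (simp_all add: prog_exec add.commute fun_eq_iff)
  have "reach prog (104, m') (5 * (T - Suc k) + 1) (\<lambda>c. fst c = 109 \<and>
     (\<forall>y. y \<notin> {12, 13} \<longrightarrow> snd c y = m' y) \<and> snd c 13 = real (s' + count_less (m' 17) (Suc k) T))"
    using Suc by (intro Suc.hyps) (auto simp: m'_def)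
  from reach_run[OF run this] show ?case
  proof (rule reach_mono)
    have "T - k = Suc (T - Suc k)" using \<open>k < T\<close> by simp
    then show "4 + of_bool (real k < m 17) + (5 * (T - Suc k) + 1) \<le> 5 * (T - k) + 1"
      by simp
  qed (use count_less_from_Suc[OF \<open>k < T\<close>, of "m 17"] in \<open>auto simp: m'_def s'_def\<close>)
qed

lemma run_load_entry:
  assumes "m 11 = real v" "m 10 = real u" "m 14 = real s1" "m 15 = real s2" "m 19 = real B"
    "m 2 = real n" "v < n" "24 \<le> B"
  shows "run prog 8 (96, m) = (104, m(0 := real (v * s2), 18 := real (B + u * s1 + v * s2),
    17 := m (B + u * s1 + v * s2) * m 8, 12 := 0))"
proof -
  define a where "a = B + u * s1 + v * s2"
  define m' where "m' = m(0 := real (v * s2), 18 := real a)"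
  have "run prog 5 (96, m) = (101, m')"
    using assms unfolding m'_def a_def by (simp add: prog_exec) (auto simp: fun_eq_iff algebra_simps)
  moreover have "exec_instr (Load 17 18) (101, m') = (102, m'(17 := m a))"
    using load_nat_address[of m' 18 a 17 101] \<open>24 \<le> B\<close> by (simp add: m'_def a_def)
  then have "run prog 3 (101, m') = (104, m'(17 := m a * m 8, 12 := 0))"
    using \<open>24 \<le> B\<close> by (simp add: prog_exec del: exec_instr.simps(6)) (simp add: m'_def a_def)
  ultimately show ?thesis
    using run_add[of prog 5 3 "(96, m)"] by (simp add: m'_def a_def)
qed

lemma count_entry:
  assumes "m 2 = real n" "m 11 = real v" "m 10 = real u" "m 14 = real s1" "m 15 = real s2"
    "m 19 = real B" "m 7 = real T" "m 3 = 1" "m 13 = real s" "24 \<le> B" "v < n"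
  shows "reach prog (96, m) (5 * T + 11) (\<lambda>c. fst c = 96 \<and> snd c 11 = real (Suc v) \<and>
     snd c 13 = real (s + count_less (m (B + u * s1 + v * s2) * m 8) 0 T) \<and>
     (\<forall>y. y \<notin> {0, 11, 12, 13, 17, 18} \<longrightarrow> snd c y = m y))"
    (is "reach _ _ _ ?Q")
proof -
  let ?x = "m (B + u * s1 + v * s2) * m 8"
  define m1 where "m1 = m(0 := real (v * s2), 18 := real (B + u * s1 + v * s2), 17 := ?x, 12 := 0)"
  have run: "run prog 8 (96, m) = (104, m1)"
    unfolding m1_def using assms by (intro run_load_entry)
  have count: "reach prog (104, m1) (5 * (T - 0) + 1) (\<lambda>c. fst c = 109 \<and>
     (\<forall>y. y \<notin> {12, 13} \<longrightarrow> snd c y = m1 y) \<and> snd c 13 = real (s + count_less ?x 0 T))"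
    using count_loop[of m1 T 0 s] assms by (simp add: m1_def)
  have after_count: "reach prog c 2 ?Q"
    if at_109: "fst c = 109 \<and> (\<forall>y. y \<notin> {12, 13} \<longrightarrow> snd c y = m1 y) \<and>
      snd c 13 = real (s + count_less ?x 0 T)" for c
  proof -
    obtain m2 where c: "c = (109, m2)" using at_109 by (cases c) auto
    have "run prog 2 c = (96, m2(11 := real (Suc v)))"
      using at_109 assms unfolding c by (simp add: prog_exec m1_def add.commute)
    then show ?thesis
      by (rule reach_by_run) (use at_109 in \<open>auto simp: c m1_def\<close>)
  qed
  have time: "5 * T + 11 = 8 + (5 * (T - 0) + 1 + 2)" by simp
  show ?thesis
    unfolding time by (rule reach_run[OF run reach_trans[OF count after_count]])
qed

lemma line_count_loop:
  assumes "m 2 = real n" "m 11 = real v" "m 10 = real u" "m 14 = real s1" "m 15 = real s2"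
    "m 19 = real B" "m 7 = real T" "m 3 = 1" "m 13 = real s" "24 \<le> B"
  shows "reach prog (96, m) ((5 * T + 11) * (n - v) + 1) (\<lambda>c. fst c = 111 \<and>
     (\<forall>y. y \<notin> {0, 11, 12, 13, 17, 18} \<longrightarrow> snd c y = m y) \<and>
     snd c 13 = real (s + (\<Sum>w\<in>{v..<n}. count_less (m (B + u * s1 + w * s2) * m 8) 0 T)))"
    (is "reach _ _ _ (?Q m v s)")
  using assms
proof (induction "n - v" arbitrary: v s m)
  case 0
  then have "run prog 1 (96, m) = (111, m)" by (simp add: prog_exec)
  then show ?case by (rule reach_by_run) (use 0 in auto)
next
  case (Suc d)
  then have "v < n" by simp
  let ?x = "\<lambda>w. count_less (m (B + u * s1 + w * s2) * m 8) 0 T"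
  have after_entry: "reach prog c ((5 * T + 11) * (n - Suc v) + 1) (?Q m v s)"
    if at_96: "fst c = 96 \<and> snd c 11 = real (Suc v) \<and> snd c 13 = real (s + ?x v) \<and>
      (\<forall>y. y \<notin> {0, 11, 12, 13, 17, 18} \<longrightarrow> snd c y = m y)" for c
  proof -
    obtain m' where c: "c = (96, m')" and m': "m' 11 = real (Suc v)" "m' 13 = real (s + ?x v)"
      "\<forall>y. y \<notin> {0, 11, 12, 13, 17, 18} \<longrightarrow> m' y = m y"
      using at_96 by (cases c) auto
    have eqs: "m' (B + u * s1 + w * s2) = m (B + u * s1 + w * s2)" "m' 8 = m 8" for w
      using m' Suc.prems by auto
    have split: "(\<Sum>w\<in>{v..<n}. ?x w) = ?x v + (\<Sum>w\<in>{Suc v..<n}. ?x w)"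
      using \<open>v < n\<close> by (simp add: sum.atLeast_Suc_lessThan)
    have "reach prog (96, m') ((5 * T + 11) * (n - Suc v) + 1) (?Q m' (Suc v) (s + ?x v))"
      using Suc.prems Suc.hyps(2) m' by (intro Suc.hyps) auto
    then show ?thesis
      unfolding c eqs by (rule reach_mono[OF _ order_refl]) (use m' split in \<open>auto simp: ac_simps\<close>)
  qed
  have "n - v = Suc (n - Suc v)" using \<open>v < n\<close> by simp
  then have time: "(5 * T + 11) * (n - v) + 1 = 5 * T + 11 + ((5 * T + 11) * (n - Suc v) + 1)"
    by simp
  show ?case
    unfolding time by (rule reach_trans[OF count_entry[OF Suc.prems \<open>v < n\<close>] after_entry])
qed

text \<open>The sum computed for line u: with strides s1 = n, s2 = 1 it is the u-th row sum of the
  matrix stored from cell B on, with s1 = 1, s2 = n the u-th column sum.\<close>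
definition line_count :: "(nat \<Rightarrow> real) \<Rightarrow> nat \<Rightarrow> nat \<Rightarrow> nat \<Rightarrow> nat \<Rightarrow> real \<Rightarrow> nat \<Rightarrow> nat \<Rightarrow> nat" where
  "line_count m n B s1 s2 c T u = (\<Sum>w<n. count_less (m (B + u * s1 + w * s2) * c) 0 T)"

lemma run_line_accepted:
  assumes "m 13 = real s" "s \<le> T" "m 7 = real T" "m 10 = real u" "m 3 = 1"
  shows "run prog 3 (111, m) = (93, m(10 := real (Suc u)))"
  using assms by (simp add: prog_exec add.commute)

lemma run_line_rejected:
  assumes "m 13 = real s" "\<not> s \<le> T" "m 7 = real T"
  shows "run prog 3 (111, m) = (123, m(0 := 0))"
  using assms by (simp add: prog_exec)

lemma check_line:
  assumes "m 2 = real n" "m 10 = real u" "m 14 = real s1" "m 15 = real s2" "m 19 = real B"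
    "m 8 = c" "m 7 = real T" "m 3 = 1" "24 \<le> B" "u < n"
  shows "reach prog (93, m) ((5 * T + 11) * n + 7) (\<lambda>cf.
     if line_count m n B s1 s2 c T u \<le> T
     then fst cf = 93 \<and> snd cf 10 = real (Suc u) \<and>
       (\<forall>y. y \<notin> {0, 10, 11, 12, 13, 17, 18} \<longrightarrow> snd cf y = m y)
     else halted prog cf \<and> snd cf 0 = 0)"
    (is "reach _ _ _ ?Q")
proof -
  define m1 where "m1 = m(13 := 0, 11 := 0)"
  have run: "run prog 3 (93, m) = (96, m1)"
    using assms unfolding m1_def by (simp add: prog_exec)
  have "line_count m1 n B s1 s2 c T u = line_count m n B s1 s2 c T u"
    using assms unfolding line_count_def m1_def by auto
  then have sum: "reach prog (96, m1) ((5 * T + 11) * (n - 0) + 1) (\<lambda>cf. fst cf = 111 \<and>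
     (\<forall>y. y \<notin> {0, 11, 12, 13, 17, 18} \<longrightarrow> snd cf y = m1 y) \<and>
     snd cf 13 = real (line_count m n B s1 s2 c T u))"
    using line_count_loop[of m1 n 0 u s1 s2 B T 0] assms
    by (simp add: m1_def line_count_def atLeast0LessThan)
  have after_sum: "reach prog cf 3 ?Q"
    if at_111: "fst cf = 111 \<and> (\<forall>y. y \<notin> {0, 11, 12, 13, 17, 18} \<longrightarrow> snd cf y = m1 y) \<and>
      snd cf 13 = real (line_count m n B s1 s2 c T u)" for cf
  proof -
    obtain m2 where cf: "cf = (111, m2)" and m2: "\<forall>y. y \<notin> {0, 11, 12, 13, 17, 18} \<longrightarrow> m2 y = m1 y"
      and sum_m2: "m2 13 = real (line_count m n B s1 s2 c T u)"
      using at_111 by (cases cf) auto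
    show ?thesis
    proof (cases "line_count m n B s1 s2 c T u \<le> T")
      case True
      have "run prog 3 cf = (93, m2(10 := real (Suc u)))"
        unfolding cf using m2 sum_m2 True assms
        by (intro run_line_accepted[where s = "line_count m n B s1 s2 c T u"]) (auto simp: m1_def)
      then show ?thesis
        by (rule reach_by_run) (use True m2 in \<open>auto simp: m1_def\<close>)
    next
      case False
      have "run prog 3 cf = (123, m2(0 := 0))"
        unfolding cf using m2 sum_m2 False assms
        by (intro run_line_rejected[where s = "line_count m n B s1 s2 c T u"]) (auto simp: m1_def)
      then show ?thesis
        by (rule reach_by_run) (use False in \<open>auto simp: halted_prog_iff\<close>)
    qed
  qed
  have time: "(5 * T + 11) * n + 7 = 3 + ((5 * T + 11) * (n - 0) + 1 + 3)" by simp
  show ?thesis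
    unfolding time by (rule reach_run[OF run reach_trans[OF sum after_sum]])
qed

lemma line_check_loop:
  assumes "m 2 = real n" "m 10 = real u" "m 14 = real s1" "m 15 = real s2" "m 19 = real B"
    "m 8 = c" "m 7 = real T" "m 3 = 1" "24 \<le> B"
  shows "reach prog (93, m) (((5 * T + 11) * n + 7) * (n - u) + 1) (\<lambda>cf.
     if \<forall>u'\<in>{u..<n}. line_count m n B s1 s2 c T u' \<le> T
     then fst cf = 115 \<and> (\<forall>y. y \<notin> {0, 10, 11, 12, 13, 17, 18} \<longrightarrow> snd cf y = m y)
     else halted prog cf \<and> snd cf 0 = 0)"
  using assms
proof (induction "n - u" arbitrary: u m)
  case 0
  then have "run prog 1 (93, m) = (115, m)" by (simp add: prog_exec)
  then show ?case by (rule reach_by_run) (use 0 in auto)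
next
  case (Suc d)
  then have "u < n" by simp
  let ?ok = "\<lambda>m u'. line_count m n B s1 s2 c T u' \<le> T"
  have "reach prog cf (((5 * T + 11) * n + 7) * (n - Suc u) + 1) (\<lambda>cf.
     if \<forall>u'\<in>{u..<n}. ?ok m u'
     then fst cf = 115 \<and> (\<forall>y. y \<notin> {0, 10, 11, 12, 13, 17, 18} \<longrightarrow> snd cf y = m y)
     else halted prog cf \<and> snd cf 0 = 0)"
    if line_done: "if ?ok m u then fst cf = 93 \<and> snd cf 10 = real (Suc u) \<and>
         (\<forall>y. y \<notin> {0, 10, 11, 12, 13, 17, 18} \<longrightarrow> snd cf y = m y)
       else halted prog cf \<and> snd cf 0 = 0" for cf
  proof (cases "?ok m u")
    case True
    obtain m' where cf: "cf = (93, m')" and m': "m' 10 = real (Suc u)"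
      "\<forall>y. y \<notin> {0, 10, 11, 12, 13, 17, 18} \<longrightarrow> m' y = m y"
      using line_done True by (cases cf) auto
    have eqs: "line_count m' n B s1 s2 c T u' = line_count m n B s1 s2 c T u'" for u'
      unfolding line_count_def using m' Suc.prems by auto
    have shift: "(\<forall>u'\<in>{u..<n}. ?ok m u') \<longleftrightarrow> (\<forall>u'\<in>{Suc u..<n}. ?ok m u')"
      using True \<open>u < n\<close> by (auto simp: atLeastLessThan_iff le_less Suc_le_eq)
    have "reach prog (93, m') (((5 * T + 11) * n + 7) * (n - Suc u) + 1) (\<lambda>cf.
       if \<forall>u'\<in>{Suc u..<n}. ?ok m' u'
       then fst cf = 115 \<and> (\<forall>y. y \<notin> {0, 10, 11, 12, 13, 17, 18} \<longrightarrow> snd cf y = m' y)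
       else halted prog cf \<and> snd cf 0 = 0)"
      using Suc.prems Suc.hyps(2) m' by (intro Suc.hyps) auto
    then show ?thesis
      unfolding cf eqs shift by (rule reach_mono[OF _ order_refl]) (use m'(2) in \<open>auto split: if_splits\<close>)
  next
    case False
    with line_done \<open>u < n\<close> show ?thesis by (intro reach_now) auto
  qed
  note after_line = this
  have "n - u = Suc (n - Suc u)" using \<open>u < n\<close> by simp
  then have "((5 * T + 11) * n + 7) * (n - u) + 1 =
      (5 * T + 11) * n + 7 + (((5 * T + 11) * n + 7) * (n - Suc u) + 1)"
    by simp
  then show ?case
    using reach_trans[OF check_line[OF Suc.prems \<open>u < n\<close>] after_line] by simp
qed

lemma check_pass:
  assumes "m 2 = real n" "m 14 = real s1" "m 15 = real s2" "m 19 = real B"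
    "m 8 = c" "m 7 = real T" "m 3 = 1" "24 \<le> B"
  shows "reach prog (92, m) (1 + (((5 * T + 11) * n + 7) * n + 1)) (\<lambda>cf.
     if \<forall>u<n. line_count m n B s1 s2 c T u \<le> T
     then fst cf = 115 \<and> (\<forall>y. y \<notin> {0, 10, 11, 12, 13, 17, 18} \<longrightarrow> snd cf y = m y)
     else halted prog cf \<and> snd cf 0 = 0)"
proof -
  have run: "run prog 1 (92, m) = (93, m(10 := 0))" by (simp add: prog_exec)
  have eqs: "line_count (m(10 := 0)) n B s1 s2 c T u = line_count m n B s1 s2 c T u" for u
    unfolding line_count_def using assms by auto
  have "reach prog (93, m(10 := 0)) (((5 * T + 11) * n + 7) * (n - 0) + 1) (\<lambda>cf.
     if \<forall>u'\<in>{0..<n}. line_count (m(10 := 0)) n B s1 s2 c T u' \<le> T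
     then fst cf = 115 \<and> (\<forall>y. y \<notin> {0, 10, 11, 12, 13, 17, 18} \<longrightarrow> snd cf y = (m(10 := 0)) y)
     else halted prog cf \<and> snd cf 0 = 0)"
    using assms by (intro line_check_loop) auto
  from reach_run[OF run this] show ?thesis
    by (rule reach_mono) (auto simp: eqs split: if_splits)
qed

lemma column_pass:
  assumes "m 2 = real n" "m 16 = 0" "m 19 = real B" "m 8 = c" "m 7 = real T" "m 3 = 1" "24 \<le> B"
  shows "reach prog (115, m) (5 + ((1 + (((5 * T + 11) * n + 7) * n + 1)) + 2)) (\<lambda>cf. halted prog cf \<and>
     snd cf 0 = (if \<forall>u<n. line_count m n B 1 n c T u \<le> T then 1 else 0))"
    (is "reach _ _ _ ?Q")
proof -
  define m' where "m' = m(16 := 1, 14 := 1, 15 := real n)"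
  have run: "run prog 5 (115, m) = (92, m')"
    unfolding m'_def using assms by (simp add: prog_exec)
  have eqs: "line_count m' n B 1 n c T u = line_count m n B 1 n c T u" for u
    unfolding line_count_def m'_def using assms by auto
  have "m' 2 = real n" "m' 14 = real 1" "m' 15 = real n" "m' 19 = real B" "m' 8 = c"
    "m' 7 = real T" "m' 3 = 1"
    using assms by (simp_all add: m'_def)
  note pass = check_pass[OF this \<open>24 \<le> B\<close>, unfolded eqs]
  have "reach prog cf 2 ?Q"
    if col_pass: "if \<forall>u<n. line_count m n B 1 n c T u \<le> T
      then fst cf = 115 \<and> (\<forall>y. y \<notin> {0, 10, 11, 12, 13, 17, 18} \<longrightarrow> snd cf y = m' y)
      else halted prog cf \<and> snd cf 0 = 0" for cf
  proof (cases "\<forall>u<n. line_count m n B 1 n c T u \<le> T")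
    case True
    with col_pass obtain m'' where cf: "cf = (115, m'')"
      and "\<forall>y. y \<notin> {0, 10, 11, 12, 13, 17, 18} \<longrightarrow> m'' y = m' y"
      by (cases cf) auto
    then have "run prog 2 cf = (121, m''(0 := 1))"
      using assms by (simp add: prog_exec m'_def)
    then show ?thesis
      by (rule reach_by_run) (use True in \<open>simp_all add: halted_prog_iff\<close>)
  next
    case False
    then show ?thesis
      using col_pass unfolding if_not_P[OF False] by (intro reach_now) simp
  qed
  from reach_trans[OF pass this] show ?thesis
    by (rule reach_run[OF run])
qed

lemma check_both_passes:
  assumes "m 2 = real n" "m 14 = real n" "m 15 = 1" "m 16 = 0" "m 19 = real B"
    "m 8 = c" "m 7 = real T" "m 3 = 1" "24 \<le> B"
  shows "reach prog (92, m) (2 * (1 + (((5 * T + 11) * n + 7) * n + 1)) + 7) (\<lambda>cf. halted prog cf \<and>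
     snd cf 0 = (if (\<forall>u<n. line_count m n B n 1 c T u \<le> T) \<and> (\<forall>u<n. line_count m n B 1 n c T u \<le> T)
                 then 1 else 0))"
proof -
  let ?rows = "\<forall>u<n. line_count m n B n 1 c T u \<le> T"
  let ?cols = "\<forall>u<n. line_count m n B 1 n c T u \<le> T"
  have after_rows: "reach prog cf (5 + ((1 + (((5 * T + 11) * n + 7) * n + 1)) + 2))
      (\<lambda>cf. halted prog cf \<and> snd cf 0 = (if ?rows \<and> ?cols then 1 else 0))"
    if row_pass: "if ?rows then fst cf = 115 \<and> (\<forall>y. y \<notin> {0, 10, 11, 12, 13, 17, 18} \<longrightarrow> snd cf y = m y)
      else halted prog cf \<and> snd cf 0 = 0" for cf
  proof (cases ?rows)
    case True
    with row_pass obtain m' where cf: "cf = (115, m')"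
      and m': "\<forall>y. y \<notin> {0, 10, 11, 12, 13, 17, 18} \<longrightarrow> m' y = m y"
      by (cases cf) auto
    have "line_count m' n B 1 n c T u = line_count m n B 1 n c T u" for u
      unfolding line_count_def using m' assms by auto
    with column_pass[of m' n B c T] m' assms True show ?thesis
      unfolding cf by simp
  next
    case False
    then show ?thesis
      using row_pass unfolding if_not_P[OF False] by (intro reach_now) simp
  qed
  have "reach prog (92, m) (1 + (((5 * T + 11) * n + 7) * n + 1)) (\<lambda>cf.
     if ?rows then fst cf = 115 \<and> (\<forall>y. y \<notin> {0, 10, 11, 12, 13, 17, 18} \<longrightarrow> snd cf y = m y)
     else halted prog cf \<and> snd cf 0 = 0)"
    using check_pass[of m n n 1 B c T] assms by simp
  from reach_trans[OF this after_rows] show ?thesis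
    by (rule reach_mono) simp_all
qed

section \<open>Correctness and running time\<close>

lemma line_count_row:
  assumes "matrix_loaded n \<kappa> M B m" "u < n"
  shows "line_count m n B n 1 (\<kappa> * real (2 * n - 1)) (2 * n - 1) u =
    (\<Sum>v\<in>{1..n}. required_arcs n \<kappa> M (u + 1) v)"
proof -
  have "line_count m n B n 1 (\<kappa> * real (2 * n - 1)) (2 * n - 1) u =
      (\<Sum>w<n. required_arcs n \<kappa> M (u + 1) (Suc w))"
    unfolding line_count_def using assms by (intro sum.cong) (auto simp: matrix_loaded_def required_arcs_def)
  then show ?thesis by (simp add: sum.atLeast1_atMost_eq)
qed

lemma line_count_column:
  assumes "matrix_loaded n \<kappa> M B m" "u < n"
  shows "line_count m n B 1 n (\<kappa> * real (2 * n - 1)) (2 * n - 1) u =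
    (\<Sum>w\<in>{1..n}. required_arcs n \<kappa> M w (u + 1))"
proof -
  have "m (B + u * 1 + w * n) = M (Suc w) (u + 1)" if "w < n" for w
    using assms that unfolding matrix_loaded_def by (metis add.commute add.assoc mult_1_right Suc_eq_plus1)
  then have "line_count m n B 1 n (\<kappa> * real (2 * n - 1)) (2 * n - 1) u =
      (\<Sum>w<n. required_arcs n \<kappa> M (Suc w) (u + 1))"
    unfolding line_count_def using assms by (intro sum.cong) (auto simp: matrix_loaded_def required_arcs_def)
  then show ?thesis by (simp add: sum.atLeast1_atMost_eq)
qed

lemma ball_atLeast1_atMost_iff: "(\<forall>u\<in>{1..n}. P u) \<longleftrightarrow> (\<forall>u<n. P (Suc u))"
  unfolding image_Suc_lessThan[symmetric] by auto

definition step_bound :: "nat \<Rightarrow> nat" where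
  "step_bound n = (62 + (6 * (n * n + 2 - 24) + 1)) + (8 + (6 * n + 1) + 10) +
     (2 * (1 + (((5 * (2 * n - 1) + 11) * n + 7) * n + 1)) + 7)"

lemma prog_checks_line_sums:
  fixes n :: nat and \<kappa> :: real and M :: "nat \<Rightarrow> nat \<Rightarrow> real"
  assumes n: "2 \<le> n" and ds: "doubly_stochastic n M"
  shows "reach prog (0, init_mem n \<kappa> M) (step_bound n) (\<lambda>cf. halted prog cf \<and> snd cf 0 =
     (if (\<forall>u\<in>{1..n}. (\<Sum>v\<in>{1..n}. required_arcs n \<kappa> M u v) \<le> 2 * n - 1) \<and>
         (\<forall>v\<in>{1..n}. (\<Sum>u\<in>{1..n}. required_arcs n \<kappa> M u v) \<le> 2 * n - 1) then 1 else 0))"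
    (is "reach _ _ _ ?Q")
proof -
  define H where "H = 8 * n * n"
  have "24 \<le> H + 2" unfolding H_def using mult_le_mono[OF n n] by simp
  have checks: "reach prog c (2 * (1 + (((5 * (2 * n - 1) + 11) * n + 7) * n + 1)) + 7) ?Q"
    if at_92: "fst c = 92 \<and> matrix_loaded n \<kappa> M (H + 2) (snd c) \<and>
      snd c 14 = real n \<and> snd c 15 = 1 \<and> snd c 16 = 0" for c
  proof -
    obtain m where c: "c = (92, m)" using at_92 by (cases c) auto
    have loaded: "matrix_loaded n \<kappa> M (H + 2) m" using at_92 unfolding c by simp
    have rows: "(\<forall>u<n. line_count m n (H + 2) n 1 (\<kappa> * real (2 * n - 1)) (2 * n - 1) u \<le> 2 * n - 1) \<longleftrightarrow>
        (\<forall>u\<in>{1..n}. (\<Sum>v\<in>{1..n}. required_arcs n \<kappa> M u v) \<le> 2 * n - 1)"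
      unfolding ball_atLeast1_atMost_iff using line_count_row[OF loaded] by simp
    have cols: "(\<forall>u<n. line_count m n (H + 2) 1 n (\<kappa> * real (2 * n - 1)) (2 * n - 1) u \<le> 2 * n - 1) \<longleftrightarrow>
        (\<forall>v\<in>{1..n}. (\<Sum>u\<in>{1..n}. required_arcs n \<kappa> M u v) \<le> 2 * n - 1)"
      unfolding ball_atLeast1_atMost_iff using line_count_column[OF loaded] by simp
    show ?thesis
      using check_both_passes[of m n "H + 2" "\<kappa> * real (2 * n - 1)" "2 * n - 1"] at_92 \<open>24 \<le> H + 2\<close>
      unfolding c rows cols by (simp add: matrix_loaded_def)
  qed
  have after_relocation: "reach prog c (8 + (6 * n + 1) + 10 + (2 * (1 + (((5 * (2 * n - 1) + 11) * n + 7) * n + 1)) + 7)) ?Q"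
    if at_68: "fst c = 68 \<and> snd c 1 = real H \<and> snd c 2 = real n \<and> snd c 3 = 1 \<and>
      (\<forall>j. 2 \<le> j \<and> j < n * n + 2 \<longrightarrow> snd c (H + j) = ((init_mem n \<kappa> M)(n := \<kappa>)) j)" for c
  proof -
    obtain m where c: "c = (68, m)" using at_68 by (cases c) auto
    have "reach prog (68, m) (8 + (6 * n + 1) + 10) (\<lambda>c. fst c = 92 \<and>
        matrix_loaded n \<kappa> M (H + 2) (snd c) \<and> snd c 14 = real n \<and> snd c 15 = 1 \<and> snd c 16 = 0)"
      using at_68 unfolding c by (intro restore_and_setup[OF n ds H_def]) auto
    from reach_trans[OF this checks] show ?thesis unfolding c .
  qed
  from reach_trans[OF relocation[OF n, of \<kappa> M, folded H_def] after_relocation] show ?thesis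
    unfolding step_bound_def by (simp add: add.assoc)
qed

lemma step_bound_le:
  assumes "1 \<le> n"
  shows "step_bound n \<le> 200 * n ^ 3"
proof -
  define X where "X = ((5 * (2 * n - 1) + 11) * n + 7) * n"
  define Y where "Y = n * n + 2 - 24"
  have "(5 * (2 * n - 1) + 11) * n \<le> (10 * n + 11) * n" by (intro mult_le_mono1) simp
  then have "X \<le> 10 * n ^ 3 + 11 * n ^ 2 + 7 * n"
    unfolding X_def by (simp add: algebra_simps power2_eq_square power3_eq_cube mult_le_mono1)
  moreover have "Y \<le> n ^ 2" unfolding Y_def by (simp add: power2_eq_square)
  ultimately have "step_bound n \<le> 20 * n ^ 3 + 28 * n ^ 2 + 20 * n + 93"
    unfolding step_bound_def X_def[symmetric] Y_def[symmetric] by simp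
  moreover have "n ^ 2 \<le> n ^ 3" "n \<le> n ^ 3" "1 \<le> n ^ 3"
    using assms power_increasing[of 1 3 n] by (simp_all add: power_increasing)
  ultimately show ?thesis by linarith
qed

lemma prog_answers_yes_for_n_1:
  "halted prog (run prog 4 (0, init_mem 1 \<kappa> M)) \<and> snd (run prog 4 (0, init_mem 1 \<kappa> M)) 0 = 1"
  by (simp add: prog_exec halted_def)

lemma prog_decides:
  assumes "1 \<le> n" "doubly_stochastic n M" "0 \<le> \<kappa>" "\<kappa> \<le> 1"
  shows "\<exists>t \<le> step_bound n. halted prog (run prog t (0, init_mem n \<kappa> M)) \<and>
     snd (run prog t (0, init_mem n \<kappa> M)) 0 =
       (if \<exists>mult. directed_regular n (2 * n - 1) mult \<and> \<kappa> \<le> direct_throughput n mult M then 1 else 0)"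
proof (cases "n = 1")
  case True
  then have "\<exists>mult. directed_regular n (2 * n - 1) mult \<and> \<kappa> \<le> direct_throughput n mult M"
    using exists_regular_network_iff[OF assms(2,1,3,4)] count_less_le by (simp add: required_arcs_def)
  with True show ?thesis
    using prog_answers_yes_for_n_1[of \<kappa> M] by (intro exI[of _ 4]) (simp add: step_bound_def)
next
  case False
  with assms(1) have "2 \<le> n" by simp
  show ?thesis
    unfolding exists_regular_network_iff[OF assms(2,1,3,4)]
    using prog_checks_line_sums[OF \<open>2 \<le> n\<close> assms(2), of \<kappa>] unfolding reach_def by simp
qed

theorem proposition5p1:
  shows "\<exists>(p :: instr list) (C :: real).
     \<forall>n \<ge> 1. \<forall>(M :: nat \<Rightarrow> nat \<Rightarrow> real) (\<kappa> :: real).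
       doubly_stochastic n M \<and> 0 \<le> \<kappa> \<and> \<kappa> \<le> 1 \<longrightarrow>
       (\<exists>t. real t \<le> C * real n ^ 3 \<and>
            halted p (run p t (0, init_mem n \<kappa> M)) \<and>
            snd (run p t (0, init_mem n \<kappa> M)) 0 =
              (if \<exists>mult. directed_regular n (2 * n - 1) mult \<and>
                          \<kappa> \<le> direct_throughput n mult M
               then 1 else 0))"
proof (rule exI[of _ prog], rule exI[of _ 200], intro allI impI)
  fix n :: nat and M :: "nat \<Rightarrow> nat \<Rightarrow> real" and \<kappa> :: real
  assume "1 \<le> n" "doubly_stochastic n M \<and> 0 \<le> \<kappa> \<and> \<kappa> \<le> 1"
  then obtain t where "t \<le> step_bound n" and answer:
    "halted prog (run prog t (0, init_mem n \<kappa> M)) \<and> snd (run prog t (0, init_mem n \<kappa> M)) 0 =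
       (if \<exists>mult. directed_regular n (2 * n - 1) mult \<and> \<kappa> \<le> direct_throughput n mult M then 1 else 0)"
    using prog_decides by blast
  have "t \<le> 200 * n ^ 3"
    using \<open>t \<le> step_bound n\<close> step_bound_le[OF \<open>1 \<le> n\<close>] by (rule order_trans)
  then have "real t \<le> 200 * real n ^ 3"
    by (metis of_nat_le_iff of_nat_mult of_nat_numeral of_nat_power)
  with answer show "\<exists>t. real t \<le> 200 * real n ^ 3 \<and>
      halted prog (run prog t (0, init_mem n \<kappa> M)) \<and>
      snd (run prog t (0, init_mem n \<kappa> M)) 0 =
        (if \<exists>mult. directed_regular n (2 * n - 1) mult \<and> \<kappa> \<le> direct_throughput n mult M then 1 else 0)"
    by blast
qed

end
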